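(* Let $\mathcal{C}\subseteq\mathcal{I}$ and let $f$ be a nonnegative real-valued function on partitions of $\mathcal{C}$ that is monotone and subadditive on the partition semilattice (with respect to refinement and join). Then the instance-independent pricing function $p(\mathbf{Q})=f(\mathcal{P}_{\mathbf{Q}}\cap\mathcal{C})$ is arbitrage-free.
   Context: $\mathcal{I}$ is a countable nonempty set of database instances; queries are deterministic functions on $\mathcal{I}$; a query bundle is a finite tuple of queries from a language $\mathcal{L}$, evaluated componentwise; $B(\mathcal{L})$ is the set of bundles, closed under concatenation $\mathbf{Q}_1,\mathbf{Q}_2$. $\mathcal{P}_{\mathbf{Q}}$ is the partition of $\mathcal{I}$ into the equivalence classes of $D\sim D'\iff\mathbf{Q}(D)=\mathbf{Q}(D')$. For a partition $\mathcal{P}$ of $\mathcal{I}$, its restriction is $\mathcal{P}\cap\mathcal{C}=\{B\cap\mathcal{C}:B\in\mathcal{P},\,B\cap\mathcal{C}\ne\emptyset\}$. $\mathcal{P}_1\succeq\mathcal{P}_2$ means each block of $\mathcal{P}_1$ is contained in a block of $\mathcal{P}_2$; the join $\mathcal{P}_1\vee\mathcal{P}_2$ has as blocks the nonempty intersections of a block of $\mathcal{P}_1$ with a block of $\mathcal{P}_2$. $f$ monotone: $\mathcal{P}_1\succeq\mathcal{P}_2\Rightarrow f(\mathcal{P}_1)\ge f(\mathcal{P}_2)$; subadditive: $f(\mathcal{P}_1\vee\mathcal{P}_2)\le f(\mathcal{P}_1)+f(\mathcal{P}_2)$. An instance-independent pricing function $p$ is arbitrage-free if (i) whenever for all $D',D''\in\mathcal{I}$,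 $\mathbf{Q}_2(D')=\mathbf{Q}_2(D'')$ implies $\mathbf{Q}_1(D')=\mathbf{Q}_1(D'')$, we have $p(\mathbf{Q}_2)\ge p(\mathbf{Q}_1)$; and (ii) $p(\mathbf{Q}_1,\mathbf{Q}_2)\le p(\mathbf{Q}_1)+p(\mathbf{Q}_2)$ for all bundles. *)

theory Defs
  imports Complex_Main "HOL-Library.Disjoint_Sets" "HOL-Library.Countable_Set"
begin

text \<open>The set of bundles over a language L is lists L; concatenation is append.\<close>

definition eval_bundle :: "('i \<Rightarrow> 'o) list \<Rightarrow> 'i \<Rightarrow> 'o list" where
  "eval_bundle Q D = map (\<lambda>q. q D) Q"

definition query_partition :: "'i set \<Rightarrow> ('i \<Rightarrow> 'o) list \<Rightarrow> 'i set set" where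
  "query_partition I Q = {{D' \<in> I. eval_bundle Q D' = eval_bundle Q D} | D. D \<in> I}"

definition restrict_partition :: "'i set set \<Rightarrow> 'i set \<Rightarrow> 'i set set" where
  "restrict_partition P C = {B \<inter> C | B. B \<in> P \<and> B \<inter> C \<noteq> {}}"

text \<open>refines P1 P2 means P1 \<succeq> P2: each block of P1 lies in a block of P2.\<close>
definition refines :: "'i set set \<Rightarrow> 'i set set \<Rightarrow> bool" where
  "refines P1 P2 \<longleftrightarrow> (\<forall>B1\<in>P1. \<exists>B2\<in>P2. B1 \<subseteq> B2)"

definition partition_join :: "'i set set \<Rightarrow> 'i set set \<Rightarrow> 'i set set" where
  "partition_join P1 P2 = {B1 \<inter> B2 | B1 B2. B1 \<in> P1 \<and> B2 \<in> P2 \<and> B1 \<inter> B2 \<noteq> {}}"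

definition monotone_partition_fun :: "'i set \<Rightarrow> ('i set set \<Rightarrow> real) \<Rightarrow> bool" where
  "monotone_partition_fun C f \<longleftrightarrow>
     (\<forall>P1 P2. partition_on C P1 \<longrightarrow> partition_on C P2 \<longrightarrow> refines P1 P2 \<longrightarrow> f P1 \<ge> f P2)"

definition subadditive_partition_fun :: "'i set \<Rightarrow> ('i set set \<Rightarrow> real) \<Rightarrow> bool" where
  "subadditive_partition_fun C f \<longleftrightarrow>
     (\<forall>P1 P2. partition_on C P1 \<longrightarrow> partition_on C P2 \<longrightarrow>
        f (partition_join P1 P2) \<le> f P1 + f P2)"

definition arbitrage_free :: "'i set \<Rightarrow> ('i \<Rightarrow> 'o) set \<Rightarrow> (('i \<Rightarrow> 'o) list \<Rightarrow> real) \<Rightarrow> bool" where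
  "arbitrage_free I L p \<longleftrightarrow>
     (\<forall>Q1\<in>lists L. \<forall>Q2\<in>lists L.
        (\<forall>D'\<in>I. \<forall>D''\<in>I. eval_bundle Q2 D' = eval_bundle Q2 D'' \<longrightarrow>
                          eval_bundle Q1 D' = eval_bundle Q1 D'') \<longrightarrow> p Q2 \<ge> p Q1)
   \<and> (\<forall>Q1\<in>lists L. \<forall>Q2\<in>lists L. p (Q1 @ Q2) \<le> p Q1 + p Q2)"

end

theory Submission
  imports Defs
begin

text \<open>Restricted to \<open>C \<subseteq> I\<close>, the partition induced by a bundle \<open>Q\<close> is the partition of \<open>C\<close>
  into the fibres of \<open>eval_bundle Q\<close>. If \<open>Q\<^sub>2\<close> determines \<open>Q\<^sub>1\<close>, the fibres of \<open>Q\<^sub>2\<close> refine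
  those of \<open>Q\<^sub>1\<close>; the fibres of \<open>Q\<^sub>1 @ Q\<^sub>2\<close> are the nonempty intersections of fibres of
  \<open>Q\<^sub>1\<close> and of \<open>Q\<^sub>2\<close>, i.e. their join. Monotonicity and subadditivity of \<open>f\<close> are then
  exactly the two arbitrage-freeness conditions.\<close>

definition fibre_partition :: "'a set \<Rightarrow> ('a \<Rightarrow> 'b) \<Rightarrow> 'a set set" where
  "fibre_partition C g = {{y \<in> C. g y = g x} | x. x \<in> C}"

lemma partition_on_fibre_partition: "partition_on C (fibre_partition C g)"
  unfolding partition_on_def fibre_partition_def disjoint_def by auto

lemma refines_fibre_partition:
  assumes "\<And>x y. x \<in> C \<Longrightarrow> y \<in> C \<Longrightarrow> g x = g y \<Longrightarrow> h x = h y"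
  shows "refines (fibre_partition C g) (fibre_partition C h)"
  unfolding refines_def fibre_partition_def using assms by auto

lemma query_partition_eq_fibre_partition: "query_partition I Q = fibre_partition I (eval_bundle Q)"
  unfolding query_partition_def fibre_partition_def ..

lemma restrict_fibre_partition:
  assumes "C \<subseteq> I"
  shows "restrict_partition (fibre_partition I g) C = fibre_partition C g"
proof (intro equalityI subsetI)
  fix B assume "B \<in> restrict_partition (fibre_partition I g) C"
  then obtain x z where "B = {y \<in> I. g y = g x} \<inter> C" and z: "z \<in> C" "g z = g x"
    unfolding restrict_partition_def fibre_partition_def by blast
  then have "B = {y \<in> C. g y = g z}" using assms by auto
  with z show "B \<in> fibre_partition C g" unfolding fibre_partition_def by blast
next
  fix B assume "B \<in> fibre_partition C g"
  then obtain x where "x \<in> C" and "B = {y \<in> C. g y = g x}"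
    unfolding fibre_partition_def by blast
  then have "B = {y \<in> I. g y = g x} \<inter> C" "x \<in> B" "x \<in> I" using assms by auto
  then show "B \<in> restrict_partition (fibre_partition I g) C"
    unfolding restrict_partition_def fibre_partition_def by blast
qed

lemma fibre_partition_eq_join:
  assumes "\<And>x y. x \<in> C \<Longrightarrow> y \<in> C \<Longrightarrow> g x = g y \<longleftrightarrow> h\<^sub>1 x = h\<^sub>1 y \<and> h\<^sub>2 x = h\<^sub>2 y"
  shows "fibre_partition C g = partition_join (fibre_partition C h\<^sub>1) (fibre_partition C h\<^sub>2)"
proof (intro equalityI subsetI)
  fix B assume "B \<in> fibre_partition C g"
  then obtain x where x: "x \<in> C" and "B = {y \<in> C. g y = g x}"
    unfolding fibre_partition_def by blast
  then have "B = {y \<in> C. h\<^sub>1 y = h\<^sub>1 x} \<inter> {y \<in> C. h\<^sub>2 y = h\<^sub>2 x}" "x \<in> B"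
    using assms by auto
  with x show "B \<in> partition_join (fibre_partition C h\<^sub>1) (fibre_partition C h\<^sub>2)"
    unfolding partition_join_def fibre_partition_def by blast
next
  fix B assume "B \<in> partition_join (fibre_partition C h\<^sub>1) (fibre_partition C h\<^sub>2)"
  then obtain x\<^sub>1 x\<^sub>2 z where "B = {y \<in> C. h\<^sub>1 y = h\<^sub>1 x\<^sub>1} \<inter> {y \<in> C. h\<^sub>2 y = h\<^sub>2 x\<^sub>2}"
      and "z \<in> B"
    unfolding partition_join_def fibre_partition_def by blast
  \<comment> \<open>a nonempty intersection of two fibres is the pair of fibres through any of its points\<close>
  then have z: "z \<in> C" and "B = {y \<in> C. h\<^sub>1 y = h\<^sub>1 z} \<inter> {y \<in> C. h\<^sub>2 y = h\<^sub>2 z}" by auto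
  then have "B = {y \<in> C. g y = g z}" using assms by auto
  with z show "B \<in> fibre_partition C g" unfolding fibre_partition_def by blast
qed

lemma eval_bundle_append_eq_iff:
  "eval_bundle (Q\<^sub>1 @ Q\<^sub>2) a = eval_bundle (Q\<^sub>1 @ Q\<^sub>2) b \<longleftrightarrow>
   eval_bundle Q\<^sub>1 a = eval_bundle Q\<^sub>1 b \<and> eval_bundle Q\<^sub>2 a = eval_bundle Q\<^sub>2 b"
  unfolding eval_bundle_def by auto

theorem lemma24:
  fixes I C :: "'i set" and L :: "('i \<Rightarrow> 'o) set" and f :: "'i set set \<Rightarrow> real"
  assumes "countable I" and "I \<noteq> {}"
    and "C \<subseteq> I"
    and "\<And>P. partition_on C P \<Longrightarrow> f P \<ge> 0"
    and "monotone_partition_fun C f"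
    and "subadditive_partition_fun C f"
  shows "arbitrage_free I L (\<lambda>Q. f (restrict_partition (query_partition I Q) C))"
proof -
  let ?P = "\<lambda>Q. fibre_partition C (eval_bundle Q)"
  have price: "restrict_partition (query_partition I Q) C = ?P Q" for Q :: "('i \<Rightarrow> 'o) list"
    using \<open>C \<subseteq> I\<close> by (simp add: query_partition_eq_fibre_partition restrict_fibre_partition)
  have determined: "f (?P Q\<^sub>1) \<le> f (?P Q\<^sub>2)"
    if "\<forall>D'\<in>I. \<forall>D''\<in>I. eval_bundle Q\<^sub>2 D' = eval_bundle Q\<^sub>2 D'' \<longrightarrow>
                         eval_bundle Q\<^sub>1 D' = eval_bundle Q\<^sub>1 D''" for Q\<^sub>1 Q\<^sub>2
  proof -
    have "refines (?P Q\<^sub>2) (?P Q\<^sub>1)"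
      using that \<open>C \<subseteq> I\<close> by (intro refines_fibre_partition) blast
    then show ?thesis using \<open>monotone_partition_fun C f\<close>
      by (simp add: monotone_partition_fun_def partition_on_fibre_partition)
  qed
  have concatenated: "f (?P (Q\<^sub>1 @ Q\<^sub>2)) \<le> f (?P Q\<^sub>1) + f (?P Q\<^sub>2)" for Q\<^sub>1 Q\<^sub>2
    using \<open>subadditive_partition_fun C f\<close>
    by (simp add: subadditive_partition_fun_def partition_on_fibre_partition
        fibre_partition_eq_join[OF eval_bundle_append_eq_iff])
  show ?thesis
    unfolding arbitrage_free_def price using determined concatenated by blast
qed

end
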